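(* Let $(X,d)$ be a compact metric space and $\omega:\Lambda\times X\to X$ an IFS with compact metric parameter space $\Lambda$. If $\omega$ has the finite shadowing property, then $\omega$ has the shadowing property.
   Context: Write $\omega_\lambda=\omega(\lambda,\cdot)$, with $\omega$ continuous. A chain is a sequence $\{y_k\}_{k\ge0}$ in $X$ such that for each $k\ge1$ there is $\lambda_k\in\Lambda$ with $y_k=\omega_{\lambda_k}(y_{k-1})$. A (finite or infinite) sequence $\{x_k\}$ is a $\delta$-chain if for each $k\ge1$ there is $\lambda_k\in\Lambda$ with $d(x_k,\omega_{\lambda_k}(x_{k-1}))\le\delta$. Shadowing property: for every $\varepsilon>0$ there is $\delta>0$ such that for every infinite $\delta$-chain $\{x_k\}_{k\ge0}$ there is a chain $\{y_k\}$ with $d(x_k,y_k)<\varepsilon$ for all $k\ge0$. Finite shadowing property: for every $\varepsilon>0$ there is $\delta>0$ such that for every finite $\delta$-chain $\{x_0,\dots,x_n\}$ there is a chain $\{y_k\}$ with $d(x_k,y_k)<\varepsilon$ for $k=0,\dots,n$. *)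

theory Defs
  imports "HOL-Analysis.Analysis"
begin

definition is_chain :: "'l set \<Rightarrow> 'x set \<Rightarrow> ('l \<times> 'x \<Rightarrow> 'x) \<Rightarrow> (nat \<Rightarrow> 'x) \<Rightarrow> bool" where
  "is_chain L X w y \<longleftrightarrow> (\<forall>k. y k \<in> X) \<and>
     (\<forall>k\<ge>1. \<exists>l\<in>L. y k = w (l, y (k - 1)))"

definition is_delta_chain :: "'l set \<Rightarrow> 'x set \<Rightarrow> ('l \<times> 'x::metric_space \<Rightarrow> 'x) \<Rightarrow> real \<Rightarrow> (nat \<Rightarrow> 'x) \<Rightarrow> bool" where
  "is_delta_chain L X w \<delta> x \<longleftrightarrow> (\<forall>k. x k \<in> X) \<and>
     (\<forall>k\<ge>1. \<exists>l\<in>L. dist (x k) (w (l, x (k - 1))) \<le> \<delta>)"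

definition is_finite_delta_chain :: "'l set \<Rightarrow> 'x set \<Rightarrow> ('l \<times> 'x::metric_space \<Rightarrow> 'x) \<Rightarrow> real \<Rightarrow> nat \<Rightarrow> (nat \<Rightarrow> 'x) \<Rightarrow> bool" where
  "is_finite_delta_chain L X w \<delta> n x \<longleftrightarrow> (\<forall>k\<le>n. x k \<in> X) \<and>
     (\<forall>k. 1 \<le> k \<and> k \<le> n \<longrightarrow> (\<exists>l\<in>L. dist (x k) (w (l, x (k - 1))) \<le> \<delta>))"

definition shadowing :: "'l set \<Rightarrow> 'x set \<Rightarrow> ('l \<times> 'x::metric_space \<Rightarrow> 'x) \<Rightarrow> bool" where
  "shadowing L X w \<longleftrightarrow> (\<forall>\<epsilon>>0. \<exists>\<delta>>0. \<forall>x. is_delta_chain L X w \<delta> x \<longrightarrow>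
      (\<exists>y. is_chain L X w y \<and> (\<forall>k. dist (x k) (y k) < \<epsilon>)))"

definition finite_shadowing :: "'l set \<Rightarrow> 'x set \<Rightarrow> ('l \<times> 'x::metric_space \<Rightarrow> 'x) \<Rightarrow> bool" where
  "finite_shadowing L X w \<longleftrightarrow> (\<forall>\<epsilon>>0. \<exists>\<delta>>0. \<forall>n x. is_finite_delta_chain L X w \<delta> n x \<longrightarrow>
      (\<exists>y. is_chain L X w y \<and> (\<forall>k\<le>n. dist (x k) (y k) < \<epsilon>)))"

end

theory Submission
  imports Defs
begin

text \<open>Given \<epsilon>, take the \<delta> that finite shadowing provides for \<epsilon>/2. Every truncation of an
  infinite \<delta>-chain x is a finite \<delta>-chain, so for each n some chain \<epsilon>/2-shadows x up to time n.
  Recording the parameters used along a chain turns it into a point of the space of sequences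
  k \<mapsto> (l k, y k) in L \<times> X with y (k + 1) = w (l k, y k). By Tychonoff and the continuity
  of w this space is compact, so the shadowing chains have a coordinatewise convergent
  subsequence; its limit is again a chain, and it \<epsilon>/2-shadows x at every time.\<close>

lemma compact_funcset_UNIV:
  assumes "compact (S::'a::metric_space set)"
  shows "compact (UNIV \<rightarrow> S :: (nat \<Rightarrow> 'a) set)"
proof -
  have "compactin (product_topology (\<lambda>_. euclidean) UNIV) (PiE UNIV (\<lambda>_. S))"
    using assms by (simp add: compactin_PiE)
  then show ?thesis by (simp add: euclidean_product_topology PiE_UNIV_domain)
qed

lemma tendsto_fun_apply:
  fixes g :: "nat \<Rightarrow> 'a::metric_space"
  assumes "(f \<longlongrightarrow> g) F"
  shows "((\<lambda>n. f n i) \<longlongrightarrow> g i) F"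
  using continuous_on_tendsto_compose[OF continuous_on_product_coordinates[of i] assms]
  by (simp add: o_def)

definition labelled_chains :: "'l set \<Rightarrow> 'x set \<Rightarrow> ('l \<times> 'x \<Rightarrow> 'x) \<Rightarrow> (nat \<Rightarrow> 'l \<times> 'x) set"
  where "labelled_chains L X w = {p. (\<forall>k. p k \<in> L \<times> X) \<and> (\<forall>k. snd (p (Suc k)) = w (p k))}"

lemma is_chain_imp_labelled_chain:
  assumes "is_chain L X w y"
  obtains p where "p \<in> labelled_chains L X w" and "\<And>k. snd (p k) = y k"
proof -
  have "\<forall>k. \<exists>l\<in>L. y (Suc k) = w (l, y k)"
    using assms unfolding is_chain_def by (metis diff_Suc_1 le_add1 plus_1_eq_Suc)
  then obtain l where l: "\<And>k. l k \<in> L" "\<And>k. y (Suc k) = w (l k, y k)"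
    by metis
  have "(\<lambda>k. (l k, y k)) \<in> labelled_chains L X w"
    using l assms unfolding labelled_chains_def is_chain_def by auto
  then show thesis by (rule that) simp
qed

lemma labelled_chain_is_chain:
  assumes "p \<in> labelled_chains L X w"
  shows "is_chain L X w (\<lambda>k. snd (p k))"
  unfolding is_chain_def
proof (intro conjI allI impI)
  fix k show "snd (p k) \<in> X"
    using assms unfolding labelled_chains_def by (auto simp: mem_Times_iff)
next
  fix k :: nat assume "k \<ge> 1"
  then obtain j where "k = Suc j" by (metis Suc_pred' less_eq_Suc_le One_nat_def)
  with assms show "\<exists>l\<in>L. snd (p k) = w (l, snd (p (k - 1)))"
    unfolding labelled_chains_def by (intro bexI[of _ "fst (p j)"]) (auto simp: mem_Times_iff)
qed

lemma closed_labelled_chains: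
  fixes L :: "'l::metric_space set" and X :: "'x::metric_space set"
  assumes "closed L" and "closed X" and "continuous_on (L \<times> X) w"
  shows "closed (labelled_chains L X w)"
  unfolding closed_sequential_limits
proof (intro allI impI)
  fix P p assume "(\<forall>n. P n \<in> labelled_chains L X w) \<and> P \<longlonglongrightarrow> p"
  then have "\<forall>n. P n \<in> labelled_chains L X w" and P_lim: "P \<longlonglongrightarrow> p"
    by auto
  then have P: "\<And>n k. P n k \<in> L \<times> X" "\<And>n k. snd (P n (Suc k)) = w (P n k)"
    unfolding labelled_chains_def by auto
  have lim: "(\<lambda>n. P n k) \<longlonglongrightarrow> p k" for k
    using P_lim by (rule tendsto_fun_apply)
  have in_LX: "p k \<in> L \<times> X" for k
    by (rule closed_sequentially[OF closed_Times[OF assms(1,2)] _ lim]) (simp add: P(1))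
  have "snd (p (Suc k)) = w (p k)" for k
  proof -
    have "(\<lambda>n. w (P n k)) \<longlonglongrightarrow> w (p k)"
      using continuous_on_tendsto_compose[OF assms(3) lim in_LX] P(1) by simp
    then have "(\<lambda>n. snd (P n (Suc k))) \<longlonglongrightarrow> w (p k)"
      using P(2) by simp
    then show ?thesis
      by (rule LIMSEQ_unique[OF tendsto_snd[OF lim]])
  qed
  with in_LX show "p \<in> labelled_chains L X w"
    unfolding labelled_chains_def by blast
qed

lemma compact_labelled_chains:
  fixes L :: "'l::metric_space set" and X :: "'x::metric_space set"
  assumes "compact L" and "compact X" and "continuous_on (L \<times> X) w"
  shows "compact (labelled_chains L X w)"
proof -
  have "compact ((UNIV \<rightarrow> L \<times> X) \<inter> labelled_chains L X w)"
    using assms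
    by (intro compact_Int_closed compact_funcset_UNIV compact_Times closed_labelled_chains
        compact_imp_closed)
  moreover have "(UNIV \<rightarrow> L \<times> X) \<inter> labelled_chains L X w = labelled_chains L X w"
    unfolding labelled_chains_def by blast
  ultimately show ?thesis by simp
qed

lemma prefix_shadowing_imp_shadowing:
  fixes L :: "'l::metric_space set" and X :: "'x::metric_space set"
  assumes "compact L" and "compact X" and "continuous_on (L \<times> X) w"
    and prefix: "\<And>n. \<exists>y. is_chain L X w y \<and> (\<forall>k\<le>n. dist (x k) (y k) \<le> e)"
  shows "\<exists>y. is_chain L X w y \<and> (\<forall>k. dist (x k) (y k) \<le> e)"
proof -
  have "\<exists>p \<in> labelled_chains L X w. \<forall>k\<le>n. dist (x k) (snd (p k)) \<le> e" for n
  proof -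
    obtain y where y: "is_chain L X w y" "\<forall>k\<le>n. dist (x k) (y k) \<le> e"
      using prefix by blast
    obtain p where p: "p \<in> labelled_chains L X w" "\<And>k. snd (p k) = y k"
      using is_chain_imp_labelled_chain[OF y(1)] by blast
    show ?thesis
      using p y(2) by (intro bexI[of _ p]) auto
  qed
  then obtain P where P: "\<And>n. P n \<in> labelled_chains L X w"
    and close: "\<And>n k. k \<le> n \<Longrightarrow> dist (x k) (snd (P n k)) \<le> e"
    by metis
  obtain p r where p: "p \<in> labelled_chains L X w" and r: "strict_mono r"
    and lim: "(P \<circ> r) \<longlonglongrightarrow> p"
    using compact_imp_seq_compact[OF compact_labelled_chains[OF assms(1-3)]] P
    by (metis seq_compactE)
  have "dist (x k) (snd (p k)) \<le> e" for k
  proof (rule tendsto_upperbound)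
    show "(\<lambda>n. dist (x k) (snd (P (r n) k))) \<longlonglongrightarrow> dist (x k) (snd (p k))"
      using tendsto_fun_apply[OF lim, of k] by (intro tendsto_intros) (simp add: o_def)
    show "\<forall>\<^sub>F n in sequentially. dist (x k) (snd (P (r n) k)) \<le> e"
    proof (rule eventually_sequentiallyI[of k])
      fix n assume "k \<le> n"
      then show "dist (x k) (snd (P (r n) k)) \<le> e"
        using seq_suble[OF r, of n] close by simp
    qed
  qed simp
  then show ?thesis
    using labelled_chain_is_chain[OF p] by blast
qed

lemma is_delta_chain_imp_finite:
  "is_delta_chain L X w \<delta> x \<Longrightarrow> is_finite_delta_chain L X w \<delta> n x"
  unfolding is_delta_chain_def is_finite_delta_chain_def by auto

theorem mainTheorem5:
  fixes X :: "'x::metric_space set" and L :: "'l::metric_space set"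
    and w :: "'l \<times> 'x \<Rightarrow> 'x"
  assumes "compact X" and "compact L"
    and "continuous_on (L \<times> X) w" and "w ` (L \<times> X) \<subseteq> X"
    and "finite_shadowing L X w"
  shows "shadowing L X w"
  unfolding shadowing_def
proof (intro allI impI)
  fix \<epsilon> :: real assume "\<epsilon> > 0"
  then have "\<epsilon>/2 > 0" by simp
  then have "\<exists>\<delta>>0. \<forall>n x. is_finite_delta_chain L X w \<delta> n x \<longrightarrow>
      (\<exists>y. is_chain L X w y \<and> (\<forall>k\<le>n. dist (x k) (y k) < \<epsilon>/2))"
    using assms(5) unfolding finite_shadowing_def by blast
  then obtain \<delta> where "\<delta> > 0" and finite: "\<And>n x. is_finite_delta_chain L X w \<delta> n x \<Longrightarrow>
      \<exists>y. is_chain L X w y \<and> (\<forall>k\<le>n. dist (x k) (y k) < \<epsilon>/2)"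
    by blast
  have "\<exists>y. is_chain L X w y \<and> (\<forall>k. dist (x k) (y k) < \<epsilon>)"
    if "is_delta_chain L X w \<delta> x" for x
  proof -
    have "\<exists>y. is_chain L X w y \<and> (\<forall>k\<le>n. dist (x k) (y k) \<le> \<epsilon>/2)" for n
      using finite[OF is_delta_chain_imp_finite[OF that]] by (meson less_imp_le)
    then have "\<exists>y. is_chain L X w y \<and> (\<forall>k. dist (x k) (y k) \<le> \<epsilon>/2)"
      by (rule prefix_shadowing_imp_shadowing[OF assms(2,1,3)])
    moreover have "\<epsilon>/2 < \<epsilon>"
      using \<open>\<epsilon> > 0\<close> by simp
    ultimately show ?thesis by (meson le_less_trans)
  qed
  with \<open>\<delta> > 0\<close> show "\<exists>\<delta>>0. \<forall>x. is_delta_chain L X w \<delta> x \<longrightarrow>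
      (\<exists>y. is_chain L X w y \<and> (\<forall>k. dist (x k) (y k) < \<epsilon>))"
    by blast
qed

end
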